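(* Let $n \ge 2$ be an integer. If $M$ is a real $n\times n$ matrix such that each of the numbers $0,1,\dots,n-1$ appears exactly $n$ times in $M$, then $$|\det M| \le n^n\,\frac{n-1}{2}\left(\frac{n+1}{12}\right)^{\frac{n-1}{2}}.$$ If $M$ is a real $n\times n$ matrix such that each of the numbers $1,2,\dots,n$ appears exactly $n$ times in $M$, then $$|\det M| \le n^n\,\frac{n+1}{2}\left(\frac{n+1}{12}\right)^{\frac{n-1}{2}}.$$ *)

theory Defs
  imports "HOL-Analysis.Analysis"
begin

end

theory Submission
  imports Defs
begin

text \<open>Pick an orthogonal \<open>Q\<close> whose \<open>k\<close>-th column is the normalised all-ones vector \<open>u\<close>.
  Then \<open>det M = \<plusminus>det (M Q)\<close>, the squared column norms \<open>t\<^sub>j\<close> of \<open>M Q\<close> add up to the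
  sum \<open>T\<close> of the squared entries of \<open>M\<close>, and \<open>t\<^sub>k = \<parallel>M u\<parallel>\<^sup>2 \<ge> (u \<bullet> M u)\<^sup>2 = (S/n)\<^sup>2\<close>, where \<open>S\<close>
  is the sum of the entries. Hadamard's inequality and AM-GM on the remaining \<open>n - 1\<close> columns give
  \<open>det\<^sup>2 M \<le> t\<^sub>k ((T - t\<^sub>k)/(n - 1))\<^sup>n\<^sup>-\<^sup>1\<close>; this is decreasing in \<open>t\<^sub>k \<ge> T/n\<close>, so \<open>t\<^sub>k\<close> may be
  replaced by \<open>(S/n)\<^sup>2\<close>. If the entries are \<open>n\<close> consecutive integers, each taken \<open>n\<close> times,
  then \<open>S\<close> and \<open>T\<close> are determined by their mean and their variance \<open>(n\<^sup>2 - 1)/12\<close>.\<close>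

lemma norm_power2_vec_eq_sum: "(norm (x :: real^'n))\<^sup>2 = (\<Sum>i\<in>UNIV. (x $ i)\<^sup>2)"
  unfolding power2_norm_eq_inner by (simp add: inner_vec_def power2_eq_square)

lemma sum_norm_row_power2:
  "(\<Sum>i\<in>UNIV. (norm (row i (A :: real^'m^'n)))\<^sup>2) = (\<Sum>i\<in>UNIV. \<Sum>j\<in>UNIV. (A $ i $ j)\<^sup>2)"
  by (simp add: norm_power2_vec_eq_sum row_def)

lemma sum_norm_column_power2:
  "(\<Sum>j\<in>UNIV. (norm (column j (A :: real^'m^'n)))\<^sup>2) = (\<Sum>i\<in>UNIV. \<Sum>j\<in>UNIV. (A $ i $ j)\<^sup>2)"
proof -
  have "(\<Sum>j\<in>UNIV. (norm (column j A))\<^sup>2) = (\<Sum>j\<in>UNIV. \<Sum>i\<in>UNIV. (A $ i $ j)\<^sup>2)"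
    by (simp add: norm_power2_vec_eq_sum column_def)
  also have "\<dots> = (\<Sum>i\<in>UNIV. \<Sum>j\<in>UNIV. (A $ i $ j)\<^sup>2)"
    by (rule sum.swap)
  finally show ?thesis .
qed

lemma norm_orthogonal_matrix_mult:
  assumes "orthogonal_matrix (Q :: real^'n^'n)"
  shows "norm (Q *v x) = norm x"
  using assms orthogonal_transformation_matrix[of "(*v) Q"] orthogonal_transformation_norm
  by simp

lemma sum_entries_power2_mult_orthogonal:
  fixes M Q :: "real^'n^'n"
  assumes "orthogonal_matrix Q"
  shows "(\<Sum>i\<in>UNIV. \<Sum>j\<in>UNIV. ((M ** Q) $ i $ j)\<^sup>2) = (\<Sum>i\<in>UNIV. \<Sum>j\<in>UNIV. (M $ i $ j)\<^sup>2)"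
proof -
  have "row i (M ** Q) = transpose Q *v row i M" for i
    by (simp add: vec_eq_iff row_def matrix_matrix_mult_def matrix_vector_mult_def
        transpose_def mult.commute)
  then have "norm (row i (M ** Q)) = norm (row i M)" for i
    using assms by (simp only: norm_orthogonal_matrix_mult orthogonal_matrix_transpose)
  then show ?thesis
    by (simp add: sum_norm_row_power2[symmetric])
qed

lemma row_vec_lambda: "row k (\<chi> k. f k) = f k"
  by (simp add: row_def vec_eq_iff)

lemma exists_row_orthogonal_to_rows:
  fixes B :: "real^'n^'n"
  assumes "i \<notin> P"
  obtains B' where "det B' = det B" "norm (row i B') \<le> norm (row i B)"
    "\<And>k. k \<noteq> i \<Longrightarrow> row k B' = row k B" "\<And>j. j \<in> P \<Longrightarrow> orthogonal (row i B') (row j B)"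
proof -
  obtain y z where yz: "y \<in> span ((\<lambda>j. row j B) ` P)"
    "\<And>w. w \<in> span ((\<lambda>j. row j B) ` P) \<Longrightarrow> orthogonal z w" "row i B = y + z"
    using orthogonal_subspace_decomp_exists by metis
  define B' where "B' = (\<chi> k. if k = i then row i B - y else row k B)"
  have "(\<lambda>j. row j B) ` P \<subseteq> {row j B |j. j \<noteq> i}"
    using assms by auto
  then have "- y \<in> vec.span {row j B |j. j \<noteq> i}"
    unfolding span_vec_eq using span_mono yz(1) span_neg by blast
  then have "det B' = det B"
    unfolding B'_def diff_conv_add_uminus by (rule det_row_span)
  moreover have "row i B' = z"
    using yz(3) by (simp add: B'_def row_vec_lambda)
  moreover have "norm z \<le> norm (row i B)"
  proof -
    have "orthogonal z y"
      using yz(1,2) by blast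
    then have "(norm (row i B))\<^sup>2 = (norm y)\<^sup>2 + (norm z)\<^sup>2"
      using yz(3) by (simp add: norm_add_Pythagorean orthogonal_commute)
    then show ?thesis
      by (simp add: power2_le_imp_le)
  qed
  moreover have "k \<noteq> i \<Longrightarrow> row k B' = row k B" for k
    by (simp add: B'_def row_vec_lambda)
  moreover have "j \<in> P \<Longrightarrow> orthogonal z (row j B)" for j
    using yz(2) span_base by blast
  ultimately show ?thesis
    using that by metis
qed

lemma exists_det_eq_rows_orthogonal_on:
  fixes A :: "real^'n^'n"
  assumes "finite P"
  shows "\<exists>B. det B = det A \<and> (\<forall>i. norm (row i B) \<le> norm (row i A)) \<and>
    (\<forall>i\<in>P. \<forall>j\<in>P. i \<noteq> j \<longrightarrow> orthogonal (row i B) (row j B))"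
  using assms
proof (induction P rule: finite_induct)
  case empty
  then show ?case by auto
next
  case (insert i P)
  then obtain B where B: "det B = det A" "\<forall>i. norm (row i B) \<le> norm (row i A)"
    "\<forall>i\<in>P. \<forall>j\<in>P. i \<noteq> j \<longrightarrow> orthogonal (row i B) (row j B)"
    by blast
  obtain B' where B': "det B' = det B" "norm (row i B') \<le> norm (row i B)"
    "\<And>k. k \<noteq> i \<Longrightarrow> row k B' = row k B" "\<And>j. j \<in> P \<Longrightarrow> orthogonal (row i B') (row j B)"
    using exists_row_orthogonal_to_rows insert.hyps(2) by metis
  have rows_P: "row k B' = row k B" if "k \<in> P" for k
    using B'(3) insert.hyps(2) that by metis
  have "\<forall>k. norm (row k B') \<le> norm (row k A)"
    using B(2) B'(2,3) by (metis order.trans)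
  moreover have "\<forall>a\<in>insert i P. \<forall>b\<in>insert i P. a \<noteq> b \<longrightarrow> orthogonal (row a B') (row b B')"
    using B(3) B'(4) rows_P by (auto simp: orthogonal_commute)
  ultimately show ?case
    using B(1) B'(1) by auto
qed

lemma hadamard_inequality:
  fixes A :: "real^'n^'n"
  shows "(det A)\<^sup>2 \<le> (\<Prod>i\<in>UNIV. (norm (row i A))\<^sup>2)"
proof -
  obtain B where B: "det B = det A" "\<forall>i. norm (row i B) \<le> norm (row i A)"
    "\<forall>i j. i \<noteq> j \<longrightarrow> orthogonal (row i B) (row j B)"
    using exists_det_eq_rows_orthogonal_on[of UNIV A] by auto
  have "(B ** transpose B) $ i $ j = row i B \<bullet> row j B" for i j
    by (simp add: matrix_matrix_mult_def inner_vec_def transpose_def row_def)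
  then have "det (B ** transpose B) = (\<Prod>i\<in>UNIV. (norm (row i B))\<^sup>2)"
    using B(3) by (subst det_diagonal) (auto simp: orthogonal_def power2_norm_eq_inner)
  then have "(det B)\<^sup>2 = (\<Prod>i\<in>UNIV. (norm (row i B))\<^sup>2)"
    by (simp add: det_mul power2_eq_square)
  also have "\<dots> \<le> (\<Prod>i\<in>UNIV. (norm (row i A))\<^sup>2)"
    using B(2) by (intro prod_mono) (auto intro: power_mono)
  finally show ?thesis
    using B(1) by simp
qed

lemma power_one_minus_mult_le_one:
  fixes x :: real
  assumes "0 \<le> x" "x \<le> 1"
  shows "(1 - x) ^ m * (1 + real m * x) \<le> 1"
proof (induction m)
  case 0
  then show ?case by simp
next
  case (Suc m)
  have "(1 - x) ^ Suc m * (1 + real (Suc m) * x) = (1 - x) ^ m * ((1 - x) * (1 + real (Suc m) * x))"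
    by (simp add: algebra_simps)
  also have "\<dots> \<le> (1 - x) ^ m * (1 + real m * x)"
    using assms by (intro mult_left_mono) (simp_all add: algebra_simps)
  finally show ?case
    using Suc by linarith
qed

text \<open>The function \<open>s \<mapsto> s (T - s)\<^sup>m\<close> decreases beyond its maximum at \<open>s = T/(m + 1)\<close>.\<close>

lemma mult_power_diff_antimono:
  fixes a s T :: real
  assumes "0 \<le> a" "a \<le> s" "s \<le> T" "T \<le> (real m + 1) * a"
  shows "s * ((T - s) / m) ^ m \<le> a * ((T - a) / m) ^ m"
proof -
  have "s * (T - s) ^ m \<le> a * (T - a) ^ m"
  proof (cases "T = a")
    case True
    then show ?thesis
      using assms by simp
  next
    case False
    define c where "c = T - a"
    define x where "x = (s - a) / c"
    have c: "c > 0" "c \<le> real m * a"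
      using assms False by (auto simp: c_def algebra_simps)
    have x: "0 \<le> x" "x \<le> 1"
      using assms c by (auto simp: x_def c_def)
    have "T - s = c * (1 - x)" and s: "s = a + c * x"
      using c by (simp_all add: x_def c_def field_simps)
    then have "s * (T - s) ^ m = c ^ m * (s * (1 - x) ^ m)"
      by (simp add: power_mult_distrib)
    also have "\<dots> \<le> c ^ m * (a * ((1 - x) ^ m * (1 + real m * x)))"
    proof (intro mult_left_mono)
      have "s \<le> a * (1 + real m * x)"
        using mult_right_mono[OF c(2) x(1)] unfolding s by (simp add: algebra_simps)
      then have "s * (1 - x) ^ m \<le> a * (1 + real m * x) * (1 - x) ^ m"
        using x by (intro mult_right_mono) simp_all
      then show "s * (1 - x) ^ m \<le> a * ((1 - x) ^ m * (1 + real m * x))"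
        by (simp add: algebra_simps)
    qed (use c in simp)
    also have "\<dots> \<le> c ^ m * a"
      using power_one_minus_mult_le_one[OF x, of m] c assms(1)
      by (intro mult_left_mono) (auto intro: mult_left_le)
    finally show ?thesis
      by (simp add: c_def mult.commute)
  qed
  then have "s * (T - s) ^ m / real m ^ m \<le> a * (T - a) ^ m / real m ^ m"
    by (simp add: divide_right_mono)
  then show ?thesis
    by (simp add: power_divide)
qed

lemma prod_le_mean_power:
  fixes t :: "'a \<Rightarrow> real"
  assumes "finite J" "J \<noteq> {}" "\<And>j. j \<in> J \<Longrightarrow> t j \<ge> 0"
  shows "(\<Prod>j\<in>J. t j) \<le> ((\<Sum>j\<in>J. t j) / card J) ^ card J"
proof -
  have J: "card J > 0"
    using assms by (simp add: card_gt_0_iff)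
  have "(\<Prod>j\<in>J. t j) = ((\<Prod>j\<in>J. t j) powr (1 / card J)) ^ card J"
  proof (cases "(\<Prod>j\<in>J. t j) = 0")
    case True
    then show ?thesis
      using J by simp
  next
    case False
    then show ?thesis
      using J assms(3) by (simp add: powr_power prod_nonneg)
  qed
  also have "\<dots> \<le> ((\<Sum>j\<in>J. t j) / card J) ^ card J"
    using arith_geom_mean[OF assms] by (intro power_mono) (simp_all add: sum_divide_distrib)
  finally show ?thesis .
qed

lemma prod_le_large_member_mult_mean_power:
  fixes t :: "'a::finite \<Rightarrow> real"
  assumes "CARD('a) \<ge> 2" "\<And>j. t j \<ge> 0" "0 \<le> a" "a \<le> t k"
    and "(\<Sum>j\<in>UNIV. t j) \<le> real CARD('a) * a"
  shows "(\<Prod>j\<in>UNIV. t j)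
    \<le> a * (((\<Sum>j\<in>UNIV. t j) - a) / (real CARD('a) - 1)) ^ (CARD('a) - 1)"
proof -
  define J where "J = UNIV - {k}"
  define T where "T = (\<Sum>j\<in>UNIV. t j)"
  have J_card: "card J = CARD('a) - 1"
    by (simp add: J_def card_Diff_singleton)
  have J_ne: "J \<noteq> {}"
    using J_card assms(1) by auto
  have "(\<Prod>j\<in>UNIV. t j) = t k * (\<Prod>j\<in>J. t j)"
    by (simp add: J_def prod.remove)
  also have "\<dots> \<le> t k * ((\<Sum>j\<in>J. t j) / card J) ^ card J"
    using assms(2) J_ne by (intro mult_left_mono prod_le_mean_power) auto
  also have "\<dots> = t k * ((T - t k) / (real CARD('a) - 1)) ^ (CARD('a) - 1)"
    using J_card assms(1) by (simp add: J_def T_def sum.remove[of UNIV k t])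
  also have "\<dots> \<le> a * ((T - a) / (real CARD('a) - 1)) ^ (CARD('a) - 1)"
  proof -
    have "t k \<le> T"
      unfolding T_def using assms(2) by (intro member_le_sum) auto
    then show ?thesis
      using mult_power_diff_antimono[of a "t k" T "CARD('a) - 1"] assms
      by (simp add: T_def)
  qed
  finally show ?thesis
    by (simp add: T_def)
qed

lemma exists_orthogonal_matrix_constant_column:
  obtains Q :: "real^'n^'n" and k where "orthogonal_matrix Q"
    "column k Q = (\<chi> i. 1 / sqrt (real CARD('n)))"
proof -
  define v :: "real^'n" where "v = (\<chi> i. 1 / sqrt (real CARD('n)))"
  have "(norm v)\<^sup>2 = 1"
    by (simp add: norm_power2_vec_eq_sum v_def power_divide)
  then have "norm v = 1"
    using norm_ge_zero[of v] by (auto simp: power2_eq_1_iff)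
  then obtain Q k where "orthogonal_matrix Q" "Q *v axis k 1 = v"
    using orthogonal_matrix_exists_basis by metis
  then show ?thesis
    using that by (simp add: matrix_vector_mult_basis v_def)
qed

lemma det_power2_le_entry_moments:
  fixes M :: "real^'n^'n"
  defines "n \<equiv> real CARD('n)"
    and "S \<equiv> \<Sum>i\<in>UNIV. \<Sum>j\<in>UNIV. M $ i $ j"
    and "T \<equiv> \<Sum>i\<in>UNIV. \<Sum>j\<in>UNIV. (M $ i $ j)\<^sup>2"
  assumes "CARD('n) \<ge> 2" and "T \<le> n * (S / n)\<^sup>2"
  shows "(det M)\<^sup>2 \<le> (S / n)\<^sup>2 * ((T - (S / n)\<^sup>2) / (n - 1)) ^ (CARD('n) - 1)"
proof -
  obtain Q :: "real^'n^'n" and k where Q: "orthogonal_matrix Q" and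
    v: "column k Q = (\<chi> i. 1 / sqrt n)"
    using exists_orthogonal_matrix_constant_column unfolding n_def by metis
  define t where "t j = (norm (column j (M ** Q)))\<^sup>2" for j
  have "(det M)\<^sup>2 = (det (transpose (M ** Q)))\<^sup>2"
    using det_orthogonal_matrix[OF Q] by (auto simp: det_mul power2_eq_square)
  also have "\<dots> \<le> (\<Prod>j\<in>UNIV. t j)"
    using hadamard_inequality[of "transpose (M ** Q)"] by (simp add: t_def)
  finally have det_le: "(det M)\<^sup>2 \<le> (\<Prod>j\<in>UNIV. t j)" .
  have sum_t: "(\<Sum>j\<in>UNIV. t j) = T"
    unfolding t_def T_def sum_norm_column_power2 using Q by (rule sum_entries_power2_mult_orthogonal)
  have "column k (M ** Q) = M *v column k Q"
    by (simp add: vec_eq_iff column_def matrix_matrix_mult_def matrix_vector_mult_def)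
  moreover have "column k Q \<bullet> (M *v column k Q) = S / n"
    using assms(4) by (simp add: v n_def S_def inner_vec_def matrix_vector_mult_def
        sum_distrib_left sum_divide_distrib mult_ac power2_eq_square[symmetric])
  moreover have "norm (column k Q) = 1"
    using Q by (simp add: orthogonal_matrix_orthonormal_columns)
  ultimately have "\<bar>S / n\<bar> \<le> norm (column k (M ** Q))"
    using Cauchy_Schwarz_ineq2[of "column k Q" "M *v column k Q"] by simp
  then have "(S / n)\<^sup>2 \<le> t k"
    unfolding t_def by (metis abs_le_square_iff abs_norm_cancel)
  moreover have "t j \<ge> 0" for j
    by (simp add: t_def)
  ultimately have "(\<Prod>j\<in>UNIV. t j) \<le> (S / n)\<^sup>2 * ((T - (S / n)\<^sup>2) / (n - 1)) ^ (CARD('n) - 1)"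
    using prod_le_large_member_mult_mean_power[of t "(S / n)\<^sup>2" k] assms(4,5)
    by (simp add: sum_t n_def)
  then show ?thesis
    using det_le by linarith
qed

lemma abs_det_le_mean_variance:
  fixes M :: "real^'n^'n" and \<mu> \<sigma>2 :: real
  defines "n \<equiv> real CARD('n)"
  assumes "CARD('n) \<ge> 2" "0 \<le> \<mu>" "0 \<le> \<sigma>2" "\<sigma>2 \<le> (n - 1) * \<mu>\<^sup>2"
    and sum: "(\<Sum>i\<in>UNIV. \<Sum>j\<in>UNIV. M $ i $ j) = n\<^sup>2 * \<mu>"
    and sum_power2: "(\<Sum>i\<in>UNIV. \<Sum>j\<in>UNIV. (M $ i $ j)\<^sup>2) = n\<^sup>2 * (\<mu>\<^sup>2 + \<sigma>2)"
  shows "\<bar>det M\<bar> \<le> n ^ CARD('n) * \<mu> * (\<sigma>2 / (n - 1)) powr ((n - 1) / 2)"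
proof -
  define X where "X = \<sigma>2 / (n - 1)"
  define m where "m = CARD('n) - 1"
  have m: "CARD('n) = Suc m" "m \<noteq> 0"
    using assms(2) by (simp_all add: m_def)
  have n: "n = real m + 1" "n \<ge> 2"
    using m assms(2) by (simp_all add: n_def)
  have mean: "n\<^sup>2 * \<mu> / n = n * \<mu>"
    using n by (simp add: power2_eq_square)
  have "n\<^sup>2 * (\<mu>\<^sup>2 + \<sigma>2) \<le> n\<^sup>2 * (\<mu>\<^sup>2 + (n - 1) * \<mu>\<^sup>2)"
    using assms(5) by (intro mult_left_mono) simp_all
  also have "\<dots> = n * (n * \<mu>)\<^sup>2"
    by (simp add: power2_eq_square algebra_simps)
  finally have "n\<^sup>2 * (\<mu>\<^sup>2 + \<sigma>2) \<le> n * (n * \<mu>)\<^sup>2" .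
  then have "(det M)\<^sup>2 \<le> (n * \<mu>)\<^sup>2 * ((n\<^sup>2 * (\<mu>\<^sup>2 + \<sigma>2) - (n * \<mu>)\<^sup>2) / (n - 1)) ^ m"
    unfolding m_def
    by (rule det_power2_le_entry_moments[OF assms(2), of M, folded n_def, unfolded sum sum_power2 mean])
  also have "(n\<^sup>2 * (\<mu>\<^sup>2 + \<sigma>2) - (n * \<mu>)\<^sup>2) / (n - 1) = n\<^sup>2 * X"
    by (simp add: X_def algebra_simps)
  also have "(n * \<mu>)\<^sup>2 * (n\<^sup>2 * X) ^ m = (n ^ CARD('n) * \<mu>)\<^sup>2 * X ^ m"
    unfolding m(1) by (simp add: power_mult_distrib power_mult[symmetric] mult_ac)
  finally have "\<bar>det M\<bar> \<le> sqrt ((n ^ CARD('n) * \<mu>)\<^sup>2 * X ^ m)"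
    using real_sqrt_le_mono by fastforce
  also have "\<dots> = n ^ CARD('n) * \<mu> * sqrt (X ^ m)"
    using assms(3) n by (simp add: real_sqrt_mult)
  also have "sqrt (X ^ m) = X powr ((n - 1) / 2)"
    using assms(4) n m(2) by (simp add: X_def powr_half_sqrt_powr powr_realpow')
  finally show ?thesis
    by (simp add: X_def)
qed

lemma sum_entries_eq_of_value_counts:
  fixes M :: "real^'m^'n" and x :: "'b \<Rightarrow> real" and f :: "real \<Rightarrow> real"
  assumes "inj_on x K" "card K * c = CARD('n) * CARD('m)"
    and "\<And>k. k \<in> K \<Longrightarrow> card {(i, j). M $ i $ j = x k} = c"
  shows "(\<Sum>i\<in>UNIV. \<Sum>j\<in>UNIV. f (M $ i $ j)) = real c * (\<Sum>k\<in>K. f (x k))"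
proof -
  define E where "E k = {(i, j). M $ i $ j = x k}" for k
  have K: "finite K"
    using assms(2) card.infinite by fastforce
  have disjoint: "\<forall>k\<in>K. \<forall>l\<in>K. k \<noteq> l \<longrightarrow> E k \<inter> E l = {}"
    using assms(1) by (auto simp: E_def inj_on_def)
  have "card (\<Union>k\<in>K. E k) = card K * c"
    using card_UN_disjoint[OF K _ disjoint] assms(3) by (simp add: E_def)
  also have "\<dots> = card (UNIV :: ('n \<times> 'm) set)"
    using assms(2) by (simp add: card_cartesian_product flip: UNIV_Times_UNIV)
  finally have UNIV_eq: "UNIV = (\<Union>k\<in>K. E k)"
    by (intro card_subset_eq[symmetric]) auto
  have "(\<Sum>i\<in>UNIV. \<Sum>j\<in>UNIV. f (M $ i $ j)) = (\<Sum>(i, j)\<in>UNIV. f (M $ i $ j))"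
    by (simp add: sum.cartesian_product flip: UNIV_Times_UNIV)
  also have "\<dots> = (\<Sum>k\<in>K. \<Sum>(i, j)\<in>E k. f (M $ i $ j))"
    unfolding UNIV_eq using disjoint by (intro sum.UNION_disjoint[OF K]) auto
  also have "\<dots> = (\<Sum>k\<in>K. \<Sum>p\<in>E k. f (x k))"
    by (intro sum.cong) (auto simp: E_def)
  also have "\<dots> = (\<Sum>k\<in>K. real c * f (x k))"
    using assms(3) by (simp add: E_def)
  finally show ?thesis
    by (simp add: sum_distrib_left)
qed

lemma sum_consecutive:
  "(\<Sum>k<N. real a + real k) = real N * (real a + (real N - 1) / 2)"
  by (induction N) (simp_all add: field_simps)

lemma sum_power2_consecutive:
  "(\<Sum>k<N. (real a + real k)\<^sup>2)
    = real N * ((real a + (real N - 1) / 2)\<^sup>2 + ((real N)\<^sup>2 - 1) / 12)"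
  by (induction N) (simp_all add: field_simps power2_eq_square)

lemma abs_det_le_consecutive_values:
  fixes M :: "real^'n^'n" and a :: nat
  defines "n \<equiv> real CARD('n)"
  assumes "CARD('n) \<ge> 2"
    and "\<And>k. k < CARD('n) \<Longrightarrow> card {(i, j). M $ i $ j = real (a + k)} = CARD('n)"
  shows "\<bar>det M\<bar> \<le> n ^ CARD('n) * (real a + (n - 1) / 2) * ((n + 1) / 12) powr ((n - 1) / 2)"
proof -
  define \<mu> where "\<mu> = real a + (n - 1) / 2"
  define \<sigma>2 where "\<sigma>2 = (n\<^sup>2 - 1) / 12"
  have n: "n \<ge> 2"
    using assms(2) by (simp add: n_def)
  have counts: "(\<Sum>i\<in>UNIV. \<Sum>j\<in>UNIV. f (M $ i $ j)) = n * (\<Sum>k<CARD('n). f (real a + real k))"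
    for f
    using sum_entries_eq_of_value_counts[of "\<lambda>k. real (a + k)" "{..<CARD('n)}" "CARD('n)" M f] assms(3)
    by (simp add: inj_on_def n_def)
  have sum: "(\<Sum>i\<in>UNIV. \<Sum>j\<in>UNIV. M $ i $ j) = n\<^sup>2 * \<mu>"
    using counts[of "\<lambda>y. y"] by (simp add: sum_consecutive \<mu>_def n_def power2_eq_square)
  have sum_power2: "(\<Sum>i\<in>UNIV. \<Sum>j\<in>UNIV. (M $ i $ j)\<^sup>2) = n\<^sup>2 * (\<mu>\<^sup>2 + \<sigma>2)"
    using counts[of "\<lambda>y. y\<^sup>2"] sum_power2_consecutive[where N = "CARD('n)"]
    by (simp add: \<mu>_def \<sigma>2_def n_def power2_eq_square)
  have "0 \<le> (n - 1) * (3 * n - 1) * (n - 2)"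
    using n by simp
  then have "\<sigma>2 \<le> (n - 1) * ((n - 1) / 2)\<^sup>2"
    by (simp add: \<sigma>2_def power2_eq_square field_simps)
  also have "\<dots> \<le> (n - 1) * \<mu>\<^sup>2"
    using n by (intro mult_left_mono power_mono) (simp_all add: \<mu>_def)
  finally have \<sigma>2_le: "\<sigma>2 \<le> (n - 1) * \<mu>\<^sup>2" .
  have "0 \<le> \<mu>" "0 \<le> \<sigma>2"
    using n by (simp_all add: \<mu>_def \<sigma>2_def)
  then have "\<bar>det M\<bar> \<le> n ^ CARD('n) * \<mu> * (\<sigma>2 / (n - 1)) powr ((n - 1) / 2)"
    unfolding n_def
    by (rule abs_det_le_mean_variance[OF assms(2) _ _ \<sigma>2_le[unfolded n_def]
          sum[unfolded n_def] sum_power2[unfolded n_def]])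
  moreover have "\<sigma>2 / (n - 1) = (n + 1) / 12"
    using n by (simp add: \<sigma>2_def power2_eq_square field_simps)
  ultimately show ?thesis
    by (simp only: \<mu>_def)
qed

theorem mainTheorem10:
  fixes M :: "real ^ 'n ^ 'n"
  assumes "CARD('n) \<ge> 2"
  shows "((\<forall>k::nat. k < CARD('n) \<longrightarrow>
             card {(i, j). M $ i $ j = real k} = CARD('n)) \<longrightarrow>
          \<bar>det M\<bar> \<le> real CARD('n) ^ CARD('n) * ((real CARD('n) - 1) / 2)
             * ((real CARD('n) + 1) / 12) powr ((real CARD('n) - 1) / 2))
       \<and> ((\<forall>k::nat. 1 \<le> k \<and> k \<le> CARD('n) \<longrightarrow>
             card {(i, j). M $ i $ j = real k} = CARD('n)) \<longrightarrow>
          \<bar>det M\<bar> \<le> real CARD('n) ^ CARD('n) * ((real CARD('n) + 1) / 2)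
             * ((real CARD('n) + 1) / 12) powr ((real CARD('n) - 1) / 2))"
proof (intro conjI impI)
  assume "\<forall>k::nat. k < CARD('n) \<longrightarrow> card {(i, j). M $ i $ j = real k} = CARD('n)"
  then show "\<bar>det M\<bar> \<le> real CARD('n) ^ CARD('n) * ((real CARD('n) - 1) / 2)
             * ((real CARD('n) + 1) / 12) powr ((real CARD('n) - 1) / 2)"
    using abs_det_le_consecutive_values[OF assms, of M 0] by simp
next
  assume counts: "\<forall>k::nat. 1 \<le> k \<and> k \<le> CARD('n) \<longrightarrow> card {(i, j). M $ i $ j = real k} = CARD('n)"
  have "card {(i, j). M $ i $ j = real (1 + k)} = CARD('n)" if "k < CARD('n)" for k
    using counts[rule_format, of "1 + k"] that by simp
  then have "\<bar>det M\<bar> \<le> real CARD('n) ^ CARD('n) * (real 1 + (real CARD('n) - 1) / 2)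
             * ((real CARD('n) + 1) / 12) powr ((real CARD('n) - 1) / 2)"
    by (rule abs_det_le_consecutive_values[OF assms])
  moreover have "real 1 + (real CARD('n) - 1) / 2 = (real CARD('n) + 1) / 2"
    by (simp add: field_simps)
  ultimately show "\<bar>det M\<bar> \<le> real CARD('n) ^ CARD('n) * ((real CARD('n) + 1) / 2)
             * ((real CARD('n) + 1) / 12) powr ((real CARD('n) - 1) / 2)"
    by (simp only:)
qed

end
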